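(* Let $\mathbf{u}_j\in c_0$, $j\in\mathbb{N}_m$, be linearly independent, $\mathbf{y}\in\mathbb{R}^m$, $\mathcal{L}(\mathbf{x}):=[\langle\mathbf{u}_j,\mathbf{x}\rangle:j\in\mathbb{N}_m]$ for $\mathbf{x}\in\ell_1(\mathbb{N})$, and $\mathcal{L}^*(\mathbf{c}):=\sum_{j\in\mathbb{N}_m}c_j\mathbf{u}_j$ for $\mathbf{c}\in\mathbb{R}^m$. Then $\hat{\mathbf{x}}\in\ell_1(\mathbb{N})$ is a solution of $\inf\{\|\mathbf{x}\|_1+\iota_{\mathbf{y}}(\mathcal{L}(\mathbf{x})):\mathbf{x}\in\ell_1(\mathbb{N})\}$ (equivalently, of $\inf\{\|\mathbf{x}\|_1:\mathbf{x}\in\ell_1(\mathbb{N}),\ \mathcal{L}(\mathbf{x})=\mathbf{y}\}$) if and only if there exists $\mathbf{c}\in\mathbb{R}^m$ such that $$\mathbf{c}=\mathrm{prox}_{\iota_{\mathbf{y}}^*}(\mathbf{c}+\mathcal{L}(\hat{\mathbf{x}}))\quad\text{and}\quad \hat{\mathbf{x}}=\mathrm{prox}_{\|\cdot\|_1,\ell_2(\mathbb{N}),\mathcal{T}_0}\big(\hat{\mathbf{x}}-\mathcal{S}\mathcal{L}^*(\mathbf{c})\big).$$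
   Context: $\ell_1(\mathbb{N})$, $\ell_2(\mathbb{N})$ are the usual sequence spaces; $c_0$ is the space of real sequences tending to $0$ with $\|\mathbf{u}\|_\infty=\sup_j|u_j|$; $\langle\mathbf{u},\mathbf{x}\rangle:=\sum_ju_jx_j$; $\mathbb{N}_m:=\{1,\dots,m\}$. $\iota_{\mathbf{y}}:\mathbb{R}^m\to\mathbb{R}\cup\{+\infty\}$ is $0$ at $\mathbf{y}$ and $+\infty$ elsewhere; its convex conjugate is $\iota_{\mathbf{y}}^*(\mathbf{c})=\langle\mathbf{y},\mathbf{c}\rangle_{\mathbb{R}^m}$. For a convex $\psi:\mathbb{R}^m\to\mathbb{R}\cup\{+\infty\}$, $\mathrm{prox}_\psi(\mathbf{a}):=\arg\min\{\frac12\|\mathbf{a}-\mathbf{c}\|_{\mathbb{R}^m}^2+\psi(\mathbf{c}):\mathbf{c}\in\mathbb{R}^m\}$ (so $\mathrm{prox}_{\iota_{\mathbf{y}}^*}(\mathbf{a})=\mathbf{a}-\mathbf{y}$). $\mathcal{T}_0:\ell_1(\mathbb{N})\to\ell_2(\mathbb{N})$ is the inclusion map, and $\mathrm{prox}_{\|\cdot\|_1,\ell_2(\mathbb{N}),\mathcal{T}_0}(\mathbf{x}):=\arg\min\{\frac12\|\mathbf{x}-\mathbf{z}\|_2^2+\|\mathbf{z}\|_1:\mathbf{z}\in\ell_1(\mathbb{N})\}=(\max\{|x_j|-1,0\}\,\mathrm{sign}(x_j):j\in\mathbb{N})$. For $\mathbf{u}\in c_0$, $\mathbb{N}(\mathbf{u}):=\{j:|u_j|=\|\mathbf{u}\|_\infty\}$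 and the truncation $\mathcal{S}(\mathbf{u})$ is the sequence equal to $u_j$ for $j\in\mathbb{N}(\mathbf{u})$ and $0$ otherwise. *)

theory Defs
  imports "HOL-Analysis.Analysis"
begin

text \<open>Real sequences are functions nat => real. The index set N_m is modelled by a
finite type 'm, so R^m is 'm => real.\<close>

definition in_l1 :: "(nat \<Rightarrow> real) \<Rightarrow> bool" where
  "in_l1 x \<longleftrightarrow> summable (\<lambda>j. \<bar>x j\<bar>)"

definition norm1 :: "(nat \<Rightarrow> real) \<Rightarrow> real" where
  "norm1 x = (\<Sum>j. \<bar>x j\<bar>)"

definition in_l2 :: "(nat \<Rightarrow> real) \<Rightarrow> bool" where
  "in_l2 x \<longleftrightarrow> summable (\<lambda>j. (x j)\<^sup>2)"

definition norm2_sq :: "(nat \<Rightarrow> real) \<Rightarrow> real" where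
  "norm2_sq x = (\<Sum>j. (x j)\<^sup>2)"

definition in_c0 :: "(nat \<Rightarrow> real) \<Rightarrow> bool" where
  "in_c0 u \<longleftrightarrow> u \<longlonglongrightarrow> 0"

definition sup_norm :: "(nat \<Rightarrow> real) \<Rightarrow> real" where
  "sup_norm u = (SUP j. \<bar>u j\<bar>)"

definition max_index_set :: "(nat \<Rightarrow> real) \<Rightarrow> nat set" where
  "max_index_set u = {j. \<bar>u j\<bar> = sup_norm u}"

definition trunc :: "(nat \<Rightarrow> real) \<Rightarrow> nat \<Rightarrow> real" where
  "trunc u j = (if j \<in> max_index_set u then u j else 0)"

definition pairing :: "(nat \<Rightarrow> real) \<Rightarrow> (nat \<Rightarrow> real) \<Rightarrow> real" where
  "pairing u x = (\<Sum>j. u j * x j)"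

definition lin_indep_seqs :: "('m::finite \<Rightarrow> nat \<Rightarrow> real) \<Rightarrow> bool" where
  "lin_indep_seqs u \<longleftrightarrow>
     (\<forall>c::'m \<Rightarrow> real. (\<forall>k. (\<Sum>i\<in>UNIV. c i * u i k) = 0) \<longrightarrow> (\<forall>i. c i = 0))"

definition Lop :: "('m::finite \<Rightarrow> nat \<Rightarrow> real) \<Rightarrow> (nat \<Rightarrow> real) \<Rightarrow> 'm \<Rightarrow> real" where
  "Lop u x = (\<lambda>i. pairing (u i) x)"

definition Ladj :: "('m::finite \<Rightarrow> nat \<Rightarrow> real) \<Rightarrow> ('m \<Rightarrow> real) \<Rightarrow> nat \<Rightarrow> real" where
  "Ladj u c = (\<lambda>k. \<Sum>i\<in>UNIV. c i * u i k)"

definition inner_m :: "('m::finite \<Rightarrow> real) \<Rightarrow> ('m \<Rightarrow> real) \<Rightarrow> real" where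
  "inner_m a b = (\<Sum>i\<in>UNIV. a i * b i)"

definition iota_conj :: "('m::finite \<Rightarrow> real) \<Rightarrow> ('m \<Rightarrow> real) \<Rightarrow> real" where
  "iota_conj y c = inner_m y c"

text \<open>Proximity operator of a real-valued convex function on R^m (the arg min, which is unique).\<close>
definition prox_m :: "(('m::finite \<Rightarrow> real) \<Rightarrow> real) \<Rightarrow> ('m \<Rightarrow> real) \<Rightarrow> 'm \<Rightarrow> real" where
  "prox_m \<psi> a = (THE c. \<forall>d. (1/2) * (\<Sum>i\<in>UNIV. (a i - c i)\<^sup>2) + \<psi> c
                             \<le> (1/2) * (\<Sum>i\<in>UNIV. (a i - d i)\<^sup>2) + \<psi> d)"

definition prox_l1 :: "(nat \<Rightarrow> real) \<Rightarrow> nat \<Rightarrow> real" where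
  "prox_l1 x = (THE z. in_l1 z \<and>
      (\<forall>w. in_l1 w \<longrightarrow> (1/2) * norm2_sq (\<lambda>j. x j - z j) + norm1 z
                         \<le> (1/2) * norm2_sq (\<lambda>j. x j - w j) + norm1 w))"

definition is_min_norm_sol :: "('m::finite \<Rightarrow> nat \<Rightarrow> real) \<Rightarrow> ('m \<Rightarrow> real) \<Rightarrow> (nat \<Rightarrow> real) \<Rightarrow> bool" where
  "is_min_norm_sol u y xh \<longleftrightarrow> in_l1 xh \<and> Lop u xh = y \<and>
     (\<forall>x. in_l1 x \<and> Lop u x = y \<longrightarrow> norm1 xh \<le> norm1 x)"

end

theory Submission
  imports Defs
begin

text \<open>
  Since \<open>prox\<close> of \<open>\<langle>y, \<cdot>\<rangle>\<close> is translation by \<open>-y\<close>, the first fixed-point equation says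
  \<open>L x = y\<close>; since \<open>prox\<close> of \<open>\<parallel>\<cdot>\<parallel>\<^sub>1\<close> is componentwise soft thresholding, the second
  says that \<open>-S L\<^sup>*c\<close> is a subgradient of \<open>\<parallel>\<cdot>\<parallel>\<^sub>1\<close> at \<open>x\<close>.

  A minimiser admits a Lagrange multiplier \<open>c\<close>, i.e. \<open>-L\<^sup>*c \<in> \<partial>\<parallel>\<cdot>\<parallel>\<^sub>1(x)\<close>: separate the
  image under \<open>(L, id)\<close> of the strict epigraph of \<open>\<parallel>\<cdot>\<parallel>\<^sub>1\<close> from \<open>(L x, \<parallel>x\<parallel>\<^sub>1)\<close> in
  \<open>\<real>\<^sup>m \<times> \<real>\<close>; linear independence of the \<open>u\<^sub>i\<close> rules out a vertical hyperplane.
  A subgradient \<open>w\<close> satisfies \<open>\<parallel>w\<parallel>\<^sub>\<infinity> \<le> 1\<close> with \<open>\<bar>w\<^sub>j\<bar> = 1\<close> on the support of \<open>x\<close>, so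
  it agrees with its truncation there. Conversely, if the truncation of \<open>w = L\<^sup>*c\<close> is a
  subgradient at \<open>x \<noteq> 0\<close>, then \<open>\<parallel>w\<parallel>\<^sub>\<infinity> = 1\<close> and \<open>\<parallel>x\<parallel>\<^sub>1 = -\<langle>w, x\<rangle> = -\<langle>w, x'\<rangle> \<le> \<parallel>x'\<parallel>\<^sub>1\<close>
  for every \<open>x'\<close> with \<open>L x' = L x\<close>.
\<close>

section \<open>Sequence spaces\<close>

lemma in_c0_bounded: "in_c0 x \<Longrightarrow> \<exists>B. \<forall>j. \<bar>x j\<bar> \<le> B"
  unfolding in_c0_def using convergent_imp_Bseq[OF convergentI] by (force simp: Bseq_def)

lemma in_l1_imp_in_c0: "in_l1 x \<Longrightarrow> in_c0 x"
  unfolding in_l1_def in_c0_def by (metis summable_LIMSEQ_zero tendsto_rabs_zero_iff)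

lemma summable_pairing:
  assumes "\<And>j. \<bar>w j\<bar> \<le> B" and "in_l1 x"
  shows "summable (\<lambda>j. w j * x j)"
proof (rule summable_comparison_test')
  show "summable (\<lambda>j. B * \<bar>x j\<bar>)"
    using assms(2) unfolding in_l1_def by (rule summable_mult)
  show "norm (w j * x j) \<le> B * \<bar>x j\<bar>" for j
    using assms(1) by (simp add: abs_mult mult_right_mono)
qed

lemma summable_pairing_c0: "in_c0 w \<Longrightarrow> in_l1 x \<Longrightarrow> summable (\<lambda>j. w j * x j)"
  using in_c0_bounded summable_pairing by metis

lemma in_l1_imp_in_l2: "in_l1 x \<Longrightarrow> in_l2 x"
  unfolding in_l2_def power2_eq_square by (rule summable_pairing_c0[OF in_l1_imp_in_c0])

lemma abs_pairing_le:
  assumes "\<And>j. \<bar>w j\<bar> \<le> B" and "in_l1 x"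
  shows "\<bar>pairing w x\<bar> \<le> B * norm1 x"
proof -
  have wx: "summable (\<lambda>j. \<bar>w j * x j\<bar>)"
    using summable_pairing[of "\<lambda>j. \<bar>w j\<bar>" B "\<lambda>j. \<bar>x j\<bar>"] assms
    by (simp add: abs_mult in_l1_def)
  have x: "summable (\<lambda>j. B * \<bar>x j\<bar>)"
    using assms(2) unfolding in_l1_def by (rule summable_mult)
  have "\<bar>pairing w x\<bar> \<le> (\<Sum>j. \<bar>w j * x j\<bar>)"
    unfolding pairing_def by (rule summable_rabs[OF wx])
  also have "\<dots> \<le> (\<Sum>j. B * \<bar>x j\<bar>)"
    using assms(1) by (intro suminf_le wx x) (simp add: abs_mult mult_right_mono)
  also have "\<dots> = B * norm1 x"
    unfolding norm1_def using assms(2) by (simp add: in_l1_def suminf_mult)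
  finally show ?thesis .
qed

lemma in_l1_lincomb: "in_l1 x \<Longrightarrow> in_l1 z \<Longrightarrow> in_l1 (\<lambda>j. a * x j + b * z j)"
  unfolding in_l1_def
proof (rule summable_comparison_test')
  assume "summable (\<lambda>j. \<bar>x j\<bar>)" "summable (\<lambda>j. \<bar>z j\<bar>)"
  then show "summable (\<lambda>j. \<bar>a\<bar> * \<bar>x j\<bar> + \<bar>b\<bar> * \<bar>z j\<bar>)"
    by (intro summable_add summable_mult)
  show "norm \<bar>a * x j + b * z j\<bar> \<le> \<bar>a\<bar> * \<bar>x j\<bar> + \<bar>b\<bar> * \<bar>z j\<bar>" for j
    by (simp add: abs_mult[symmetric] abs_triangle_ineq)
qed

lemma in_l1_diff: "in_l1 x \<Longrightarrow> in_l1 z \<Longrightarrow> in_l1 (\<lambda>j. x j - z j)"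
  using in_l1_lincomb[of x z 1 "-1"] by simp

lemma in_l1_finite_support: "finite S \<Longrightarrow> (\<And>j. j \<notin> S \<Longrightarrow> x j = 0) \<Longrightarrow> in_l1 x"
  unfolding in_l1_def by (rule sums_summable[OF sums_finite]) auto

lemma norm1_nonneg: "in_l1 x \<Longrightarrow> 0 \<le> norm1 x"
  unfolding norm1_def in_l1_def by (simp add: suminf_nonneg)

lemma norm1_lincomb_le:
  assumes "in_l1 x" "in_l1 z"
  shows "norm1 (\<lambda>j. a * x j + b * z j) \<le> \<bar>a\<bar> * norm1 x + \<bar>b\<bar> * norm1 z"
proof -
  have xs: "summable (\<lambda>j. \<bar>x j\<bar>)" and zs: "summable (\<lambda>j. \<bar>z j\<bar>)"
    using assms unfolding in_l1_def by auto
  have "norm1 (\<lambda>j. a * x j + b * z j) \<le> (\<Sum>j. \<bar>a\<bar> * \<bar>x j\<bar> + \<bar>b\<bar> * \<bar>z j\<bar>)"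
    unfolding norm1_def
    using in_l1_lincomb[OF assms, of a b] xs zs
    by (intro suminf_le summable_add summable_mult)
      (auto simp: in_l1_def abs_mult[symmetric] abs_triangle_ineq)
  also have "\<dots> = \<bar>a\<bar> * norm1 x + \<bar>b\<bar> * norm1 z"
    unfolding norm1_def
    using suminf_add[OF summable_mult[OF xs] summable_mult[OF zs]] suminf_mult[OF xs] suminf_mult[OF zs]
    by simp
  finally show ?thesis .
qed

lemma norm1_add_single:
  assumes "in_l1 x"
  shows "in_l1 (\<lambda>j. x j + (if j = k then t else 0))"
    and "norm1 (\<lambda>j. x j + (if j = k then t else 0)) = norm1 x + \<bar>x k + t\<bar> - \<bar>x k\<bar>"
proof -
  have e: "(\<lambda>j. \<bar>x j + (if j = k then t else 0)\<bar>)
      = (\<lambda>j. \<bar>x j\<bar> + (if j = k then \<bar>x k + t\<bar> - \<bar>x k\<bar> else 0))"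
    by auto
  have xs: "summable (\<lambda>j. \<bar>x j\<bar>)" using assms unfolding in_l1_def .
  have s: "(\<lambda>j. if j = k then \<bar>x k + t\<bar> - \<bar>x k\<bar> else 0) sums (\<bar>x k + t\<bar> - \<bar>x k\<bar>)"
    using sums_single[of k "\<lambda>_. \<bar>x k + t\<bar> - \<bar>x k\<bar>"] by simp
  show "in_l1 (\<lambda>j. x j + (if j = k then t else 0))"
    unfolding in_l1_def e by (intro summable_add xs sums_summable[OF s])
  show "norm1 (\<lambda>j. x j + (if j = k then t else 0)) = norm1 x + \<bar>x k + t\<bar> - \<bar>x k\<bar>"
    unfolding norm1_def e using suminf_add[OF xs sums_summable[OF s]] sums_unique[OF s] by simp
qed

lemma pairing_single: "pairing w (\<lambda>j. if j = k then r else 0) = w k * r"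
  unfolding pairing_def using sums_unique[OF sums_single[of k "\<lambda>j. w j * r"]]
  by (simp add: if_distrib cong: if_cong)

lemma pairing_lincomb:
  assumes "in_c0 w" "in_l1 x" "in_l1 z"
  shows "pairing w (\<lambda>j. a * x j + b * z j) = a * pairing w x + b * pairing w z"
proof -
  have sx: "summable (\<lambda>j. w j * x j)" and sz: "summable (\<lambda>j. w j * z j)"
    using summable_pairing_c0 assms by auto
  have "pairing w (\<lambda>j. a * x j + b * z j) = (\<Sum>j. a * (w j * x j) + b * (w j * z j))"
    unfolding pairing_def by (simp add: algebra_simps)
  also have "\<dots> = a * pairing w x + b * pairing w z"
    unfolding pairing_def
    using suminf_add[OF summable_mult[OF sx] summable_mult[OF sz]] suminf_mult[OF sx] suminf_mult[OF sz]
    by simp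
  finally show ?thesis .
qed

lemma in_c0_Ladj: "(\<And>i. in_c0 (u i)) \<Longrightarrow> in_c0 (Ladj u c)"
  unfolding in_c0_def Ladj_def
  using tendsto_sum[of UNIV "\<lambda>i k. c i * u i k" "\<lambda>_. 0"] by (simp add: tendsto_mult_right_zero)

lemma pairing_Ladj:
  assumes "\<And>i. in_c0 (u i)" "in_l1 x"
  shows "pairing (Ladj u c) x = (\<Sum>i\<in>UNIV. c i * pairing (u i) x)"
proof -
  have s: "summable (\<lambda>j. c i * (u i j * x j))" for i
    using summable_pairing_c0 assms by (intro summable_mult) auto
  have "pairing (Ladj u c) x = (\<Sum>j. \<Sum>i\<in>UNIV. c i * (u i j * x j))"
    unfolding pairing_def Ladj_def by (simp add: sum_distrib_right mult.assoc)
  also have "\<dots> = (\<Sum>i\<in>UNIV. \<Sum>j. c i * (u i j * x j))"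
    by (rule suminf_sum) (rule s)
  also have "\<dots> = (\<Sum>i\<in>UNIV. c i * pairing (u i) x)"
    unfolding pairing_def using summable_pairing_c0 assms by (simp add: suminf_mult)
  finally show ?thesis .
qed

section \<open>Proximity operators\<close>

lemma prox_m_iota_conj: "prox_m (iota_conj y) a = (\<lambda>i. a i - y i)"
proof -
  define f where "f c = (1/2) * (\<Sum>i\<in>UNIV. (a i - c i)\<^sup>2) + iota_conj y c" for c
  define c0 where "c0 = (\<lambda>i. a i - y i)"
  have f_sum: "f d = (\<Sum>i\<in>UNIV. (1/2) * (a i - d i)\<^sup>2 + y i * d i)" for d
    unfolding f_def iota_conj_def inner_m_def by (simp add: sum_distrib_left sum.distrib)
  have growth: "f d = f c0 + (1/2) * (\<Sum>i\<in>UNIV. (d i - c0 i)\<^sup>2)" for d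
  proof -
    have "(1/2) * (a i - d i)\<^sup>2 + y i * d i
        = ((1/2) * (a i - c0 i)\<^sup>2 + y i * c0 i) + (1/2) * (d i - c0 i)\<^sup>2" for i
      unfolding c0_def power2_eq_square by (simp add: algebra_simps)
    then have "f d = (\<Sum>i\<in>UNIV. ((1/2) * (a i - c0 i)\<^sup>2 + y i * c0 i) + (1/2) * (d i - c0 i)\<^sup>2)"
      unfolding f_sum by presburger
    also have "\<dots> = f c0 + (1/2) * (\<Sum>i\<in>UNIV. (d i - c0 i)\<^sup>2)"
      by (simp only: sum.distrib f_sum[of c0] sum_distrib_left)
    finally show ?thesis .
  qed
  have "prox_m (iota_conj y) a = (THE c. \<forall>d. f c \<le> f d)"
    unfolding prox_m_def f_def ..
  also have "\<dots> = c0"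
  proof (rule the_equality)
    show "\<forall>d. f c0 \<le> f d"
    proof
      fix d
      have "0 \<le> (\<Sum>i\<in>UNIV. (d i - c0 i)\<^sup>2)" by (simp add: sum_nonneg)
      then show "f c0 \<le> f d" using growth[of d] by linarith
    qed
    fix c assume "\<forall>d. f c \<le> f d"
    then have "f c \<le> f c0" by blast
    then have "(\<Sum>i\<in>UNIV. (c i - c0 i)\<^sup>2) \<le> 0"
      using growth[of c] by linarith
    then have "\<forall>i\<in>UNIV. (c i - c0 i)\<^sup>2 = 0"
      using sum_nonneg_eq_0_iff[of UNIV "\<lambda>i. (c i - c0 i)\<^sup>2"] by (simp add: antisym sum_nonneg)
    then show "c = c0" by auto
  qed
  finally show ?thesis unfolding c0_def .
qed

definition soft_threshold :: "real \<Rightarrow> real" where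
  "soft_threshold t = sgn t * max (\<bar>t\<bar> - 1) 0"

lemma soft_threshold_cases: "soft_threshold t = (if t > 1 then t - 1 else if t < -1 then t + 1 else 0)"
  by (auto simp: soft_threshold_def sgn_if max_def)

lemma abs_soft_threshold_le: "\<bar>soft_threshold t\<bar> \<le> \<bar>t\<bar>"
  by (simp add: soft_threshold_cases)

lemma soft_threshold_quadratic_growth:
  "(1/2) * (t - soft_threshold t)\<^sup>2 + \<bar>soft_threshold t\<bar> + (1/2) * (s - soft_threshold t)\<^sup>2
     \<le> (1/2) * (t - s)\<^sup>2 + \<bar>s\<bar>"
proof -
  consider "t > 1" | "t < -1" | "-1 \<le> t" "t \<le> 1" by linarith
  then show ?thesis
  proof cases
    case 1
    then have st: "soft_threshold t = t - 1" by (simp add: soft_threshold_cases)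
    show ?thesis
      unfolding st using abs_ge_self[of s] 1 by (simp add: power2_eq_square algebra_simps)
  next
    case 2
    then have st: "soft_threshold t = t + 1" by (simp add: soft_threshold_cases)
    show ?thesis
      unfolding st using abs_ge_minus_self[of s] 2 by (simp add: power2_eq_square algebra_simps)
  next
    case 3
    then have "soft_threshold t = 0" by (simp add: soft_threshold_cases)
    moreover have "s * t \<le> \<bar>s\<bar>"
    proof -
      have "s * t \<le> \<bar>s\<bar> * \<bar>t\<bar>" by (metis abs_ge_self abs_mult)
      also have "\<dots> \<le> \<bar>s\<bar>" using 3 by (simp add: mult_left_le)
      finally show ?thesis .
    qed
    ultimately show ?thesis by (simp add: power2_eq_square algebra_simps)
  qed
qed

definition is_subgradient_abs :: "real \<Rightarrow> real \<Rightarrow> bool" where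
  "is_subgradient_abs a g \<longleftrightarrow> (\<forall>t. \<bar>a\<bar> + g * (t - a) \<le> \<bar>t\<bar>)"

lemma is_subgradient_abs_iff: "is_subgradient_abs a g \<longleftrightarrow> \<bar>g\<bar> \<le> 1 \<and> (a \<noteq> 0 \<longrightarrow> g = sgn a)"
proof
  assume g: "is_subgradient_abs a g"
  have "\<bar>g\<bar> \<le> 1"
    using g[unfolded is_subgradient_abs_def, rule_format, of "a + 1"]
      g[unfolded is_subgradient_abs_def, rule_format, of "a - 1"]
      abs_triangle_ineq[of a 1] abs_triangle_ineq4[of a 1] by simp
  moreover have "g = sgn a" if "a \<noteq> 0"
  proof -
    have "\<bar>a\<bar> \<le> g * a"
      using g[unfolded is_subgradient_abs_def, rule_format, of 0] by simp
    then have "a > 0 \<Longrightarrow> 1 \<le> g" and "a < 0 \<Longrightarrow> g \<le> -1"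
      by (simp, smt (verit) mult_le_cancel_right2 mult_minus_left)
    with \<open>\<bar>g\<bar> \<le> 1\<close> that show ?thesis
      by (cases "a > 0") (auto simp: sgn_if)
  qed
  ultimately show "\<bar>g\<bar> \<le> 1 \<and> (a \<noteq> 0 \<longrightarrow> g = sgn a)" by blast
next
  assume g: "\<bar>g\<bar> \<le> 1 \<and> (a \<noteq> 0 \<longrightarrow> g = sgn a)"
  show "is_subgradient_abs a g"
    unfolding is_subgradient_abs_def
  proof
    fix t
    show "\<bar>a\<bar> + g * (t - a) \<le> \<bar>t\<bar>"
    proof (cases "a = 0")
      case True
      have "g * t \<le> \<bar>g\<bar> * \<bar>t\<bar>"
        by (metis abs_ge_self abs_mult)
      also have "\<dots> \<le> \<bar>t\<bar>"
        using g by (simp add: mult_left_le_one_le)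
      finally show ?thesis using True by simp
    next
      case False
      then have "g = sgn a" using g by blast
      then show ?thesis
        using False by (cases "a > 0") simp_all
    qed
  qed
qed

lemma soft_threshold_fixpoint_iff: "a = soft_threshold (a + g) \<longleftrightarrow> is_subgradient_abs a g"
  unfolding is_subgradient_abs_iff soft_threshold_cases
  by (cases a rule: linorder_cases[of _ 0]) (auto simp: sgn_if)

lemma norm2_sq_nonneg: "in_l2 x \<Longrightarrow> 0 \<le> norm2_sq x"
  unfolding in_l2_def norm2_sq_def by (simp add: suminf_nonneg)

lemma norm2_sq_eq_0_iff: "in_l2 x \<Longrightarrow> norm2_sq x = 0 \<longleftrightarrow> (\<forall>j. x j = 0)"
  unfolding in_l2_def norm2_sq_def by (simp add: suminf_eq_zero_iff)

lemma in_l1_soft_threshold: "in_l1 x \<Longrightarrow> in_l1 (\<lambda>j. soft_threshold (x j))"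
  unfolding in_l1_def
  by (rule summable_comparison_test'[where g = "\<lambda>j. \<bar>x j\<bar>"]) (simp_all add: abs_soft_threshold_le)

lemma prox_l1_objective_sums:
  assumes "in_l1 x" "in_l1 z"
  shows "(\<lambda>j. (1/2) * (x j - z j)\<^sup>2 + \<bar>z j\<bar>) sums ((1/2) * norm2_sq (\<lambda>j. x j - z j) + norm1 z)"
proof -
  have "summable (\<lambda>j. (x j - z j)\<^sup>2)"
    using in_l1_imp_in_l2[OF in_l1_diff[OF assms]] unfolding in_l2_def .
  moreover have "summable (\<lambda>j. \<bar>z j\<bar>)"
    using assms(2) unfolding in_l1_def .
  ultimately show ?thesis
    unfolding norm2_sq_def norm1_def by (intro sums_add sums_mult summable_sums)
qed

lemma prox_l1_objective_growth:
  assumes x: "in_l1 x" and z: "in_l1 z"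
  defines "p \<equiv> \<lambda>j. soft_threshold (x j)"
  shows "(1/2) * norm2_sq (\<lambda>j. x j - p j) + norm1 p + (1/2) * norm2_sq (\<lambda>j. z j - p j)
    \<le> (1/2) * norm2_sq (\<lambda>j. x j - z j) + norm1 z"
proof (rule sums_le)
  have p: "in_l1 p"
    unfolding p_def using in_l1_soft_threshold[OF x] .
  have "summable (\<lambda>j. (z j - p j)\<^sup>2)"
    using in_l1_imp_in_l2[OF in_l1_diff[OF z p]] unfolding in_l2_def .
  then show "(\<lambda>j. ((1/2) * (x j - p j)\<^sup>2 + \<bar>p j\<bar>) + (1/2) * (z j - p j)\<^sup>2) sums
      ((1/2) * norm2_sq (\<lambda>j. x j - p j) + norm1 p + (1/2) * norm2_sq (\<lambda>j. z j - p j))"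
    unfolding norm2_sq_def[of "\<lambda>j. z j - p j"]
    by (intro sums_add prox_l1_objective_sums[OF x p] sums_mult summable_sums)
  show "(\<lambda>j. (1/2) * (x j - z j)\<^sup>2 + \<bar>z j\<bar>) sums ((1/2) * norm2_sq (\<lambda>j. x j - z j) + norm1 z)"
    using prox_l1_objective_sums[OF x z] .
  show "(1/2) * (x j - p j)\<^sup>2 + \<bar>p j\<bar> + (1/2) * (z j - p j)\<^sup>2 \<le> (1/2) * (x j - z j)\<^sup>2 + \<bar>z j\<bar>" for j
    unfolding p_def by (rule soft_threshold_quadratic_growth)
qed

lemma prox_l1_soft_threshold:
  assumes x: "in_l1 x"
  shows "prox_l1 x = (\<lambda>j. soft_threshold (x j))"
  unfolding prox_l1_def
proof (rule the_equality)
  define p where "p = (\<lambda>j. soft_threshold (x j))"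
  have p: "in_l1 p"
    unfolding p_def using in_l1_soft_threshold[OF x] .
  have l2: "in_l2 (\<lambda>j. z j - p j)" if "in_l1 z" for z
    using in_l1_imp_in_l2[OF in_l1_diff[OF that p]] .
  show "in_l1 p \<and> (\<forall>w. in_l1 w \<longrightarrow> (1/2) * norm2_sq (\<lambda>j. x j - p j) + norm1 p
      \<le> (1/2) * norm2_sq (\<lambda>j. x j - w j) + norm1 w)"
  proof (intro conjI allI impI p)
    fix w
    assume "in_l1 w"
    then show "(1/2) * norm2_sq (\<lambda>j. x j - p j) + norm1 p \<le> (1/2) * norm2_sq (\<lambda>j. x j - w j) + norm1 w"
      using prox_l1_objective_growth[OF x, of w] norm2_sq_nonneg[OF l2[of w]]
      unfolding p_def by linarith
  qed
  fix z
  assume "in_l1 z \<and> (\<forall>w. in_l1 w \<longrightarrow> (1/2) * norm2_sq (\<lambda>j. x j - z j) + norm1 z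
      \<le> (1/2) * norm2_sq (\<lambda>j. x j - w j) + norm1 w)"
  then have z: "in_l1 z" and "norm2_sq (\<lambda>j. z j - p j) \<le> 0"
    using p prox_l1_objective_growth[OF x, of z] unfolding p_def by force+
  then have "norm2_sq (\<lambda>j. z j - p j) = 0"
    using norm2_sq_nonneg[OF l2[OF z]] by linarith
  then show "z = p"
    using norm2_sq_eq_0_iff[OF l2[OF z]] by auto
qed

section \<open>Truncation\<close>

lemma abs_le_sup_norm: "in_c0 w \<Longrightarrow> \<bar>w j\<bar> \<le> sup_norm w"
  unfolding sup_norm_def using in_c0_bounded
  by (metis bdd_aboveI2 cSUP_upper UNIV_I)

lemma sup_norm_le: "(\<And>j. \<bar>w j\<bar> \<le> B) \<Longrightarrow> sup_norm w \<le> B"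
  unfolding sup_norm_def by (rule cSUP_least) auto

lemma trunc_eq_self: "\<bar>w j\<bar> = sup_norm w \<Longrightarrow> trunc w j = w j"
  unfolding trunc_def max_index_set_def by simp

lemma trunc_nonzeroD: "trunc w j \<noteq> 0 \<Longrightarrow> \<bar>w j\<bar> = sup_norm w \<and> trunc w j = w j"
  unfolding trunc_def max_index_set_def by (auto split: if_splits)

lemma abs_trunc_le: "\<bar>trunc w j\<bar> \<le> \<bar>w j\<bar>"
  unfolding trunc_def by auto

lemma in_l1_trunc:
  assumes w: "in_c0 w"
  shows "in_l1 (trunc w)"
proof (cases "sup_norm w > 0")
  case False
  then have "w j = 0" for j
    using abs_le_sup_norm[OF w, of j] by linarith
  then have "trunc w = (\<lambda>j. 0)"
    by (simp add: trunc_def fun_eq_iff)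
  then show ?thesis
    by (simp add: in_l1_finite_support[of "{}"])
next
  case True
  then obtain N where N: "\<And>j. j \<ge> N \<Longrightarrow> \<bar>w j\<bar> < sup_norm w"
    using w unfolding in_c0_def tendsto_iff eventually_sequentially by force
  show ?thesis
  proof (rule in_l1_finite_support[of "{..<N}"])
    show "trunc w j = 0" if "j \<notin> {..<N}" for j
      using N[of j] trunc_nonzeroD[of w j] that by force
  qed simp
qed

section \<open>Optimality conditions\<close>

lemma pairing_bounded_above_imp_zero:
  assumes "\<And>x. in_l1 x \<Longrightarrow> pairing w x \<le> K"
  shows "w k = 0"
proof (rule ccontr)
  assume "w k \<noteq> 0"
  define x where "x = (\<lambda>j. if j = k then (\<bar>K\<bar> + 1) / w k else 0)"
  have "in_l1 x"
    unfolding x_def by (rule in_l1_finite_support[of "{k}"]) auto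
  then have "pairing w x \<le> K"
    by (rule assms)
  moreover have "pairing w x = \<bar>K\<bar> + 1"
    unfolding x_def pairing_single using \<open>w k \<noteq> 0\<close> by simp
  ultimately show False
    by linarith
qed

lemma convex_strict_epigraph_image:
  fixes u :: "'m::finite \<Rightarrow> nat \<Rightarrow> real"
  assumes u: "\<And>i. in_c0 (u i)"
  shows "convex {((\<chi> i. pairing (u i) x) :: real^'m, t) | x t. in_l1 x \<and> norm1 x < t}"
    (is "convex ?A")
  unfolding convex_def
proof (intro ballI allI impI)
  fix p q :: "(real^'m) \<times> real" and a b :: real
  assume "p \<in> ?A" "q \<in> ?A" and ab: "0 \<le> a" "0 \<le> b" "a + b = 1"
  then obtain x t z s where pq: "p = ((\<chi> i. pairing (u i) x), t)" "q = ((\<chi> i. pairing (u i) z), s)"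
    and x: "in_l1 x" "norm1 x < t" and z: "in_l1 z" "norm1 z < s"
    by blast
  have "norm1 (\<lambda>j. a * x j + b * z j) \<le> a * norm1 x + b * norm1 z"
    using norm1_lincomb_le[OF x(1) z(1), of a b] ab by simp
  also have "\<dots> < a * t + b * s"
  proof (cases "a = 0")
    case False
    then have "a * norm1 x < a * t"
      using ab x(2) by simp
    moreover have "b * norm1 z \<le> b * s"
      using ab z(2) by (simp add: mult_left_mono)
    ultimately show ?thesis
      by linarith
  qed (use ab z(2) in simp)
  finally have "norm1 (\<lambda>j. a * x j + b * z j) < a * t + b * s" .
  moreover have "a *\<^sub>R p + b *\<^sub>R q = ((\<chi> i. pairing (u i) (\<lambda>j. a * x j + b * z j)), a * t + b * s)"
    unfolding pq using pairing_lincomb[OF u x(1) z(1)] by (simp add: vec_eq_iff)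
  ultimately show "a *\<^sub>R p + b *\<^sub>R q \<in> ?A"
    using in_l1_lincomb[OF x(1) z(1)] by blast
qed

lemma min_norm_sol_separation:
  fixes u :: "'m::finite \<Rightarrow> nat \<Rightarrow> real"
  assumes u: "\<And>i. in_c0 (u i)" and sol: "is_min_norm_sol u y xh"
  obtains g s where "(\<exists>i. g i \<noteq> 0) \<or> s \<noteq> 0"
    and "\<And>x t. in_l1 x \<Longrightarrow> norm1 x < t \<Longrightarrow>
      pairing (Ladj u g) x + s * t \<le> pairing (Ladj u g) xh + s * norm1 xh"
proof -
  have xh: "in_l1 xh" and Lxh: "Lop u xh = y"
    and min: "\<And>x. in_l1 x \<Longrightarrow> Lop u x = y \<Longrightarrow> norm1 xh \<le> norm1 x"
    using sol unfolding is_min_norm_sol_def by auto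
  define Lv :: "(nat \<Rightarrow> real) \<Rightarrow> real^'m" where "Lv x = (\<chi> i. pairing (u i) x)" for x
  define A where "A = {(Lv x, t) | x t. in_l1 x \<and> norm1 x < t}"
  have "convex A"
    unfolding A_def Lv_def by (rule convex_strict_epigraph_image[OF u])
  moreover have "(Lv xh, norm1 xh + 1) \<in> A"
    unfolding A_def using xh by auto
  moreover have "A \<inter> {(Lv xh, norm1 xh)} = {}"
  proof -
    have "norm1 xh \<le> norm1 x" if "in_l1 x" "Lv x = Lv xh" for x
      using min[OF that(1)] that(2) Lxh by (simp add: Lv_def Lop_def vec_eq_iff fun_eq_iff)
    then show ?thesis
      unfolding A_def by (auto simp: not_less[symmetric])
  qed
  ultimately obtain a b where a0: "a \<noteq> 0"
    and below: "\<forall>p\<in>A. inner a p \<le> b" and above: "inner a (Lv xh, norm1 xh) \<ge> b"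
    using separating_hyperplane_sets[of A "{(Lv xh, norm1 xh)}"] by blast
  obtain gv s where a: "a = (gv, s)"
    by (cases a)
  have inner_a: "inner a (Lv x, t) = pairing (Ladj u (\<lambda>i. gv $ i)) x + s * t" if "in_l1 x" for x t
    unfolding a Lv_def pairing_Ladj[OF u that] by (simp add: inner_vec_def)
  show thesis
  proof (rule that)
    show "(\<exists>i. gv $ i \<noteq> 0) \<or> s \<noteq> 0"
      using a0 unfolding a by (auto simp: vec_eq_iff zero_prod_def)
    fix x t
    assume "in_l1 x" "norm1 x < t"
    then have "inner a (Lv x, t) \<le> b"
      using below unfolding A_def by blast
    with above show "pairing (Ladj u (\<lambda>i. gv $ i)) x + s * t
        \<le> pairing (Ladj u (\<lambda>i. gv $ i)) xh + s * norm1 xh"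
      using inner_a[OF \<open>in_l1 x\<close>, of t] inner_a[OF xh, of "norm1 xh"] by linarith
  qed
qed

lemma min_norm_sol_lagrange_multiplier:
  fixes u :: "'m::finite \<Rightarrow> nat \<Rightarrow> real"
  assumes u: "\<And>i. in_c0 (u i)" and li: "lin_indep_seqs u" and sol: "is_min_norm_sol u y xh"
  obtains c where "\<And>x. in_l1 x \<Longrightarrow> norm1 xh + pairing (Ladj u c) xh \<le> norm1 x + pairing (Ladj u c) x"
proof -
  have xh: "in_l1 xh"
    using sol unfolding is_min_norm_sol_def by blast
  obtain g s where gs: "(\<exists>i. g i \<noteq> 0) \<or> s \<noteq> 0"
    and sep: "\<And>x t. in_l1 x \<Longrightarrow> norm1 x < t \<Longrightarrow>
      pairing (Ladj u g) x + s * t \<le> pairing (Ladj u g) xh + s * norm1 xh"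
    using min_norm_sol_separation[OF u sol] by blast
  define K where "K = pairing (Ladj u g) xh + s * norm1 xh"
  have zero: "in_l1 (\<lambda>j. 0)" "norm1 (\<lambda>j. 0) = 0" "pairing w (\<lambda>j. 0) = 0" for w
    by (simp_all add: in_l1_def norm1_def pairing_def)
  have "s \<le> 0"
  proof (rule ccontr)
    assume "\<not> s \<le> 0"
    then have "s * ((\<bar>K\<bar> + 1) / s) \<le> K"
      using sep[OF zero(1), of "(\<bar>K\<bar> + 1) / s"] zero(2,3) unfolding K_def by simp
    with \<open>\<not> s \<le> 0\<close> show False
      by simp
  qed
  moreover have "s \<noteq> 0"
  proof
    assume "s = 0"
    then have "pairing (Ladj u g) x \<le> K" if "in_l1 x" for x
      using sep[OF that, of "norm1 x + 1"] unfolding K_def by simp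
    then have "(\<Sum>i\<in>UNIV. g i * u i k) = 0" for k
      using pairing_bounded_above_imp_zero[of "Ladj u g" K k] unfolding Ladj_def by blast
    then show False
      using li gs \<open>s = 0\<close> unfolding lin_indep_seqs_def by blast
  qed
  ultimately have "s < 0"
    by simp
  define c where "c i = g i / s" for i
  have pairing_c: "pairing (Ladj u c) x = pairing (Ladj u g) x / s" if "in_l1 x" for x
    unfolding pairing_Ladj[OF u that] c_def by (simp add: sum_divide_distrib)
  show thesis
  proof (rule that[of c], rule field_le_epsilon)
    fix x and e :: real
    assume x: "in_l1 x" and "0 < e"
    then have "pairing (Ladj u g) x + s * (norm1 x + e) \<le> K"
      using sep[OF x, of "norm1 x + e"] unfolding K_def by simp
    then have "K / s \<le> (pairing (Ladj u g) x + s * (norm1 x + e)) / s"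
      using \<open>s < 0\<close> by (simp add: divide_right_mono_neg)
    also have "\<dots> = pairing (Ladj u g) x / s + (norm1 x + e)"
      using \<open>s < 0\<close> by (simp add: add_divide_distrib)
    finally have "K / s \<le> pairing (Ladj u g) x / s + (norm1 x + e)" .
    then show "norm1 xh + pairing (Ladj u c) xh \<le> norm1 x + pairing (Ladj u c) x + e"
      using \<open>s < 0\<close> pairing_c[OF x] pairing_c[OF xh] unfolding K_def by (simp add: add_divide_distrib)
  qed
qed

lemma multiplier_imp_subgradient_abs:
  assumes w: "in_c0 w" and xh: "in_l1 xh"
    and opt: "\<And>x. in_l1 x \<Longrightarrow> norm1 xh + pairing w xh \<le> norm1 x + pairing w x"
  shows "is_subgradient_abs (xh k) (- w k)"
  unfolding is_subgradient_abs_def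
proof
  fix t
  define x where "x = (\<lambda>j. xh j + (if j = k then t - xh k else 0))"
  have single: "in_l1 (\<lambda>j. if j = k then t - xh k else 0)"
    by (rule in_l1_finite_support[of "{k}"]) auto
  have x: "in_l1 x" and "norm1 x = norm1 xh + \<bar>t\<bar> - \<bar>xh k\<bar>"
    unfolding x_def using norm1_add_single[OF xh, of k "t - xh k"] by simp_all
  moreover have "pairing w x = pairing w xh + w k * (t - xh k)"
    unfolding x_def using pairing_lincomb[OF w xh single, of 1 1] by (simp add: pairing_single)
  ultimately show "\<bar>xh k\<bar> + - w k * (t - xh k) \<le> \<bar>t\<bar>"
    using opt[OF x] by simp
qed

lemma subgradient_abs_trunc:
  assumes w: "in_c0 w" and sub: "\<And>j. is_subgradient_abs (a j) (- w j)"
  shows "is_subgradient_abs (a k) (- trunc w k)"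
proof -
  have le1: "\<bar>w j\<bar> \<le> 1" for j
    using sub[of j] by (simp add: is_subgradient_abs_iff)
  show ?thesis
  proof (cases "a k = 0")
    case True
    then show ?thesis
      using le1[of k] abs_trunc_le[of w k] by (simp add: is_subgradient_abs_iff)
  next
    case False
    then have "- w k = sgn (a k)"
      using sub[of k] by (simp add: is_subgradient_abs_iff)
    then have "\<bar>w k\<bar> = \<bar>sgn (a k)\<bar>"
      by (metis abs_minus_cancel)
    then have "\<bar>w k\<bar> = 1"
      using False by (simp add: abs_sgn_eq_1)
    then have "\<bar>w k\<bar> = sup_norm w"
      using abs_le_sup_norm[OF w, of k] sup_norm_le[of w 1, OF le1] by linarith
    then have "trunc w k = w k"
      by (rule trunc_eq_self)
    then show ?thesis
      using sub[of k] by simp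
  qed
qed

lemma subgradient_abs_trunc_imp_norm1_le:
  assumes w: "in_c0 w" and xh: "in_l1 xh" and x: "in_l1 x"
    and sub: "\<And>k. is_subgradient_abs (xh k) (- trunc w k)"
    and same: "pairing w x = pairing w xh"
  shows "norm1 xh \<le> norm1 x"
proof (cases "\<forall>k. xh k = 0")
  case True
  then show ?thesis
    using norm1_nonneg[OF x] by (simp add: norm1_def)
next
  case False
  have trunc_sgn: "trunc w k = - sgn (xh k)" if "xh k \<noteq> 0" for k
    using sub[of k] that by (simp add: is_subgradient_abs_iff)
  obtain k0 where "xh k0 \<noteq> 0"
    using False by blast
  then have "trunc w k0 \<noteq> 0" and "\<bar>trunc w k0\<bar> = 1"
    using trunc_sgn[of k0] by (simp_all add: abs_sgn_eq_1 sgn_0_0)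
  then have "sup_norm w = 1"
    using trunc_nonzeroD[of w k0] by simp
  then have le1: "\<bar>w j\<bar> \<le> 1" for j
    using abs_le_sup_norm[OF w, of j] by simp
  have "w k * xh k = - \<bar>xh k\<bar>" for k
  proof (cases "xh k = 0")
    case False
    then have "w k = - sgn (xh k)"
      using trunc_sgn[of k] trunc_nonzeroD[of w k] by (simp add: sgn_0_0)
    then show ?thesis
      by (simp add: sgn_if)
  qed simp
  then have "norm1 xh = - pairing w xh"
    using xh unfolding norm1_def pairing_def in_l1_def by (simp add: suminf_minus)
  also have "\<dots> \<le> norm1 x"
    using same abs_pairing_le[of w 1, OF le1 x] by simp
  finally show ?thesis .
qed

lemma is_min_norm_sol_iff_subgradient_abs_trunc:
  fixes u :: "'m::finite \<Rightarrow> nat \<Rightarrow> real"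
  assumes u: "\<And>i. in_c0 (u i)" and li: "lin_indep_seqs u" and xh: "in_l1 xh"
  shows "is_min_norm_sol u y xh \<longleftrightarrow>
    Lop u xh = y \<and> (\<exists>c. \<forall>k. is_subgradient_abs (xh k) (- trunc (Ladj u c) k))"
proof
  assume sol: "is_min_norm_sol u y xh"
  obtain c where "\<And>x. in_l1 x \<Longrightarrow> norm1 xh + pairing (Ladj u c) xh \<le> norm1 x + pairing (Ladj u c) x"
    using min_norm_sol_lagrange_multiplier[OF u li sol] by blast
  then have "is_subgradient_abs (xh k) (- Ladj u c k)" for k
    using multiplier_imp_subgradient_abs[OF in_c0_Ladj[of u, OF u] xh] by blast
  then have "is_subgradient_abs (xh k) (- trunc (Ladj u c) k)" for k
    using subgradient_abs_trunc[OF in_c0_Ladj[of u, OF u]] by blast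
  then show "Lop u xh = y \<and> (\<exists>c. \<forall>k. is_subgradient_abs (xh k) (- trunc (Ladj u c) k))"
    using sol unfolding is_min_norm_sol_def by blast
next
  assume "Lop u xh = y \<and> (\<exists>c. \<forall>k. is_subgradient_abs (xh k) (- trunc (Ladj u c) k))"
  then obtain c where Lxh: "Lop u xh = y" and sub: "\<And>k. is_subgradient_abs (xh k) (- trunc (Ladj u c) k)"
    by blast
  have "norm1 xh \<le> norm1 x" if x: "in_l1 x" and "Lop u x = y" for x
  proof (rule subgradient_abs_trunc_imp_norm1_le[OF in_c0_Ladj[of u, OF u] xh x sub])
    show "pairing (Ladj u c) x = pairing (Ladj u c) xh"
      using \<open>Lop u x = y\<close> Lxh unfolding pairing_Ladj[OF u x] pairing_Ladj[OF u xh]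
      by (simp add: Lop_def fun_eq_iff)
  qed
  then show "is_min_norm_sol u y xh"
    unfolding is_min_norm_sol_def using xh Lxh by blast
qed

theorem mainTheorem15:
  fixes u :: "'m::finite \<Rightarrow> nat \<Rightarrow> real"
    and y :: "'m \<Rightarrow> real"
    and xh :: "nat \<Rightarrow> real"
  assumes "\<forall>i. in_c0 (u i)"
    and "lin_indep_seqs u"
    and "in_l1 xh"
  shows "is_min_norm_sol u y xh \<longleftrightarrow>
    (\<exists>c :: 'm \<Rightarrow> real.
        c = prox_m (iota_conj y) (\<lambda>i. c i + Lop u xh i) \<and>
        xh = prox_l1 (\<lambda>k. xh k - trunc (Ladj u c) k))"
proof -
  have u: "\<And>i. in_c0 (u i)"
    using assms(1) by blast
  have dual_fixpoint: "c = prox_m (iota_conj y) (\<lambda>i. c i + Lop u xh i) \<longleftrightarrow> Lop u xh = y" for c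
    by (auto simp: prox_m_iota_conj fun_eq_iff)
  have primal_fixpoint: "xh = prox_l1 (\<lambda>k. xh k - trunc (Ladj u c) k) \<longleftrightarrow>
      (\<forall>k. is_subgradient_abs (xh k) (- trunc (Ladj u c) k))" for c
  proof -
    have "in_l1 (\<lambda>k. xh k - trunc (Ladj u c) k)"
      using in_l1_diff[OF assms(3) in_l1_trunc[OF in_c0_Ladj[of u, OF u]]] .
    then have "prox_l1 (\<lambda>k. xh k - trunc (Ladj u c) k) = (\<lambda>k. soft_threshold (xh k - trunc (Ladj u c) k))"
      by (rule prox_l1_soft_threshold)
    then show ?thesis
      unfolding fun_eq_iff soft_threshold_fixpoint_iff[symmetric] by simp
  qed
  show ?thesis
    by (simp add: dual_fixpoint primal_fixpoint is_min_norm_sol_iff_subgradient_abs_trunc[OF u assms(2,3)])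
qed

end
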